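(* Let $\mathcal{H}$ be a separable Hilbert space with inner product $\langle\cdot,\cdot\rangle$ and norm $\|\cdot\|$, let $X\subset\mathcal{H}$ be closed and convex, and let $\Lambda,\Sigma>0$. Let $\phi:\mathcal{H}\to\mathbb{R}$ be twice continuously differentiable, with gradient $\nabla\phi(x)\in\mathcal{H}$ and Hessian $\nabla^2\phi(x):\mathcal{H}\to\mathcal{H}$, such that $$C_\phi:=\sup_{x\in X}\big(|\phi(x)|+\|\nabla\phi(x)\|+|||\nabla^2\phi(x)|||\big)<\infty,\qquad |||\nabla^2\phi(x)|||:=\sup\{\|\nabla^2\phi(x)w\|:\|w\|\le1\}.$$ For $\nu_0,\mu\in\mathcal{M}(X)$, let $\beta_{0,\star}\in\mathcal{M}(\mathfrak{C}\times\mathfrak{C})$ be optimal in the cone formulation of $\mathrm{HK}_{\Lambda,\Sigma}(\nu_0,\mu)^2$, with first marginal $\alpha_0\in\mathcal{M}_2(\mathfrak{C})$, $\mathfrak{h}\alpha_0\le\nu_0$, and second marginal $\alpha_\star\in\mathcal{M}_2(\mathfrak{C})$, $\mathfrak{h}\alpha_\star\le\mu$. Then $$\Big|\frac4\Sigma\Big(\int_X\phi\,d\mu-\int_X\phi\,d\nu_0\Big)-\Big(\mathfrak{F}_{0,\star,\phi}-\frac8\Sigma\int_X\phi\,d(\nu_0-\mathfrak{h}\alpha_0)\Big)\Big|\le C_\phi\,(6+16\Lambda/\Sigma)\,\mathrm{HK}_{\Lambda,\Sigma}(\nu_0,\mu)^2,$$ where $$\mathfrak{F}_{0,\star,\phi}=\frac4\Sigma\int_{\mathfrak{C}\times\mathfrak{C}}\Big[-2r_1^2\phi(x_1)+2r_1r_2\phi(x_1)\cos\big(\sqrt{\Sigma/(4\Lambda)}\|x_1-x_2\|\big)+r_1r_2\sqrt{4\Lambda/\Sigma}\,\langle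 S_{\Lambda,\Sigma}(x_1,x_2),\nabla\phi(x_1)\rangle\Big]d\beta_{0,\star},$$ with $S_{\Lambda,\Sigma}(x_1,x_2)=\frac{\sin(\sqrt{\Sigma/(4\Lambda)}\|x_1-x_2\|)}{\|x_1-x_2\|}(x_2-x_1)$ for $x_1\ne x_2$ and $S_{\Lambda,\Sigma}(x_1,x_1)=0$.
   Context: $\mathcal{M}(X)$: finite nonnegative Radon measures on $X$. Cone: $\mathfrak{C}=(X\times[0,\infty))/\sim$, where $(x_1,r_1)\sim(x_2,r_2)$ iff $r_1=r_2=0$ or ($r_1=r_2$, $x_1=x_2$); $[x,r]$ denotes classes, $\mathfrak{o}$ the vertex, identified with $[\bar x,0]$ for a fixed $\bar x\in X$. Cone distance: $\mathsf{d}_{\mathfrak{C},\Lambda,\Sigma}([x_1,r_1],[x_2,r_2])^2=\frac4\Sigma\big(r_1^2+r_2^2-2r_1r_2\cos(\min\{\sqrt{\Sigma/(4\Lambda)}\|x_1-x_2\|,\pi\})\big)$. $\mathcal{M}_2(\mathfrak{C})$: finite nonnegative Radon measures on $\mathfrak{C}$ with $\int\mathsf{d}_{\mathfrak{C},\Lambda,\Sigma}([x,r],\mathfrak{o})^2d\alpha<\infty$. For $\alpha\in\mathcal{M}_2(\mathfrak{C})$, $\mathfrak{h}\alpha\in\mathcal{M}(X)$ is given by $\int_X\psi\,d(\mathfrak{h}\alpha)=\int_{\mathfrak{C}}r^2\psi(x)\,d\alpha([x,r])$. The Hellinger–Kantorovich distance satisfies (cone formulation) $\mathrm{HK}_{\Lambda,\Sigma}(\mu_1,\mu_2)^2=\min\{\int_{\mathfrak{C}\times\mathfrak{C}}\mathsf{d}_{\mathfrak{C},\Lambda,\Sigma}^2\,d\beta+\frac4\Sigma\sum_{i=1}^2(\mu_i-\mathfrak{h}\beta_i)(X)\}$,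 the minimum over finite nonnegative Radon measures $\beta$ on $\mathfrak{C}\times\mathfrak{C}$ whose marginals $\beta_1,\beta_2$ lie in $\mathcal{M}_2(\mathfrak{C})$ with $\mathfrak{h}\beta_i\le\mu_i$; $\beta$ is optimal if it attains the minimum. *)

theory Defs
  imports "HOL-Analysis.Analysis"
begin

text \<open>Cone points [x,r] are represented by pairs (x,r) with r \<ge> 0; all quantities
  used below are invariant under the vertex identification.\<close>

definition cone_dist :: "real \<Rightarrow> real \<Rightarrow> ('a::real_normed_vector \<times> real) \<Rightarrow> ('a \<times> real) \<Rightarrow> real" where
  "cone_dist \<Lambda> \<Sigma> p q = sqrt (4 / \<Sigma> * ((snd p)\<^sup>2 + (snd q)\<^sup>2
     - 2 * snd p * snd q * cos (min (sqrt (\<Sigma> / (4 * \<Lambda>)) * norm (fst p - fst q)) pi)))"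

text \<open>Finite nonnegative (Borel, hence Radon) measures on X, as measures on the ambient space concentrated on X.\<close>
definition meas_on :: "'a::topological_space set \<Rightarrow> 'a measure \<Rightarrow> bool" where
  "meas_on X \<mu> \<longleftrightarrow> sets \<mu> = sets borel \<and> finite_measure \<mu> \<and> emeasure \<mu> (UNIV - X) = 0"

definition cone_meas :: "'a::topological_space set \<Rightarrow> ('a \<times> real) measure \<Rightarrow> bool" where
  "cone_meas X \<alpha> \<longleftrightarrow> sets \<alpha> = sets borel \<and> finite_measure \<alpha> \<and> emeasure \<alpha> (UNIV - X \<times> {0..}) = 0"

text \<open>M_2(C): finite second moment w.r.t. the vertex o (represented by (0,0)).\<close>
definition cone_M2 :: "real \<Rightarrow> real \<Rightarrow> 'a::real_normed_vector set \<Rightarrow> ('a \<times> real) measure \<Rightarrow> bool" where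
  "cone_M2 \<Lambda> \<Sigma> X \<alpha> \<longleftrightarrow> cone_meas X \<alpha> \<and> integrable \<alpha> (\<lambda>p. (cone_dist \<Lambda> \<Sigma> p (0, 0))\<^sup>2)"

definition hmap :: "('a::topological_space \<times> real) measure \<Rightarrow> 'a measure" where
  "hmap \<alpha> = distr (density \<alpha> (\<lambda>p. ennreal ((snd p)\<^sup>2))) borel fst"

definition meas_le :: "'a::topological_space measure \<Rightarrow> 'a measure \<Rightarrow> bool" where
  "meas_le \<mu> \<nu> \<longleftrightarrow> (\<forall>A\<in>sets borel. emeasure \<mu> A \<le> emeasure \<nu> A)"

definition marg1 :: "(('a::topological_space \<times> real) \<times> ('a \<times> real)) measure \<Rightarrow> ('a \<times> real) measure" where
  "marg1 \<beta> = distr \<beta> borel fst"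

definition marg2 :: "(('a::topological_space \<times> real) \<times> ('a \<times> real)) measure \<Rightarrow> ('a \<times> real) measure" where
  "marg2 \<beta> = distr \<beta> borel snd"

definition HK_admissible :: "real \<Rightarrow> real \<Rightarrow> 'a::real_normed_vector set \<Rightarrow> 'a measure \<Rightarrow> 'a measure
    \<Rightarrow> (('a \<times> real) \<times> ('a \<times> real)) measure \<Rightarrow> bool" where
  "HK_admissible \<Lambda> \<Sigma> X \<mu>1 \<mu>2 \<beta> \<longleftrightarrow> sets \<beta> = sets borel \<and> finite_measure \<beta>
     \<and> cone_M2 \<Lambda> \<Sigma> X (marg1 \<beta>) \<and> cone_M2 \<Lambda> \<Sigma> X (marg2 \<beta>)
     \<and> meas_le (hmap (marg1 \<beta>)) \<mu>1 \<and> meas_le (hmap (marg2 \<beta>)) \<mu>2"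

definition HK_cost :: "real \<Rightarrow> real \<Rightarrow> 'a::real_normed_vector set \<Rightarrow> 'a measure \<Rightarrow> 'a measure
    \<Rightarrow> (('a \<times> real) \<times> ('a \<times> real)) measure \<Rightarrow> real" where
  "HK_cost \<Lambda> \<Sigma> X \<mu>1 \<mu>2 \<beta> = (\<integral>pq. (cone_dist \<Lambda> \<Sigma> (fst pq) (snd pq))\<^sup>2 \<partial>\<beta>)
     + 4 / \<Sigma> * ((measure \<mu>1 X - measure (hmap (marg1 \<beta>)) X) + (measure \<mu>2 X - measure (hmap (marg2 \<beta>)) X))"

definition HK2 :: "real \<Rightarrow> real \<Rightarrow> 'a::real_normed_vector set \<Rightarrow> 'a measure \<Rightarrow> 'a measure \<Rightarrow> real" where
  "HK2 \<Lambda> \<Sigma> X \<mu>1 \<mu>2 = Inf {HK_cost \<Lambda> \<Sigma> X \<mu>1 \<mu>2 \<beta> | \<beta>. HK_admissible \<Lambda> \<Sigma> X \<mu>1 \<mu>2 \<beta>}"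

definition HK_optimal :: "real \<Rightarrow> real \<Rightarrow> 'a::real_normed_vector set \<Rightarrow> 'a measure \<Rightarrow> 'a measure
    \<Rightarrow> (('a \<times> real) \<times> ('a \<times> real)) measure \<Rightarrow> bool" where
  "HK_optimal \<Lambda> \<Sigma> X \<mu>1 \<mu>2 \<beta> \<longleftrightarrow> HK_admissible \<Lambda> \<Sigma> X \<mu>1 \<mu>2 \<beta>
     \<and> HK_cost \<Lambda> \<Sigma> X \<mu>1 \<mu>2 \<beta> = HK2 \<Lambda> \<Sigma> X \<mu>1 \<mu>2"

definition S_LS :: "real \<Rightarrow> real \<Rightarrow> 'a::real_normed_vector \<Rightarrow> 'a \<Rightarrow> 'a" where
  "S_LS \<Lambda> \<Sigma> x1 x2 = (if x1 = x2 then 0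
     else (sin (sqrt (\<Sigma> / (4 * \<Lambda>)) * norm (x1 - x2)) / norm (x1 - x2)) *\<^sub>R (x2 - x1))"

definition F_functional :: "real \<Rightarrow> real \<Rightarrow> ('a::real_inner \<Rightarrow> real) \<Rightarrow> ('a \<Rightarrow> 'a)
    \<Rightarrow> (('a \<times> real) \<times> ('a \<times> real)) measure \<Rightarrow> real" where
  "F_functional \<Lambda> \<Sigma> \<phi> grad \<beta> = 4 / \<Sigma> * (\<integral>pq. (case pq of ((x1, r1), (x2, r2)) \<Rightarrow>
      - 2 * r1\<^sup>2 * \<phi> x1 + 2 * r1 * r2 * \<phi> x1 * cos (sqrt (\<Sigma> / (4 * \<Lambda>)) * norm (x1 - x2))
      + r1 * r2 * sqrt (4 * \<Lambda> / \<Sigma>) * inner (S_LS \<Lambda> \<Sigma> x1 x2) (grad x1)) \<partial>\<beta>)"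

definition C_phi :: "'a set \<Rightarrow> ('a \<Rightarrow> real) \<Rightarrow> ('a::real_normed_vector \<Rightarrow> 'a) \<Rightarrow> ('a \<Rightarrow> 'a \<Rightarrow>\<^sub>L 'a) \<Rightarrow> real" where
  "C_phi X \<phi> grad hess = (SUP x\<in>X. \<bar>\<phi> x\<bar> + norm (grad x) + norm (hess x))"

end

theory Submission
  imports Defs
begin

text \<open>
  For a transport pair ((x1, r1), (x2, r2)) the integrand of F_functional is the first-order
  expansion of r2^2 \<phi>(x2) - r1^2 \<phi>(x1) along the cone geodesic between the two points.
  A second-order Taylor bound for \<phi> on the convex set X, combined with x^2 \<le> 6 (1 - cos x)
  and x - sin x \<le> 4 (1 - cos x) on [0, \<pi>], bounds the error by C_phi (6 + 16 \<Lambda> / \<Sigma>) times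
  the squared cone distance; beyond the angle \<pi> the cone distance is r1 + r2 and crude bounds
  suffice. Integrating against \<beta> accounts for the parts of \<mu> and \<nu>0 carried by the
  marginals. On the unmatched parts \<mu> - hmap (marg2 \<beta>) and \<nu>0 - hmap (marg1 \<beta>) the
  integral of \<phi> is at most C_phi times their mass, and these masses are exactly the creation
  and destruction terms of HK2.
\<close>

section \<open>Elementary estimates\<close>

lemma x_minus_sin_le_cube:
  fixes x :: real
  assumes "0 \<le> x"
  shows "x - sin x \<le> x ^ 3 / 6"
proof -
  have "\<bar>sin x - (\<Sum>m<3. sin_coeff m * x ^ m)\<bar> \<le> inverse (fact 3) * \<bar>x\<bar> ^ 3"
    by (rule Maclaurin_sin_bound)
  moreover have "(\<Sum>m<3. sin_coeff m * x ^ m) = x"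
    by (simp add: eval_nat_numeral sin_coeff_def)
  ultimately have "\<bar>sin x - x\<bar> \<le> x ^ 3 / 6"
    using assms by (simp add: eval_nat_numeral)
  then show ?thesis
    by linarith
qed

lemma square_le_6_one_minus_cos:
  fixes x :: real
  assumes "0 \<le> x" "x \<le> pi"
  shows "x\<^sup>2 \<le> 6 * (1 - cos x)"
proof -
  \<comment> \<open>1 - cos x = 2 sin (x / 2) ^ 2, and sin y \<ge> 7 y / 12 for 0 \<le> y \<le> \<pi> / 2.\<close>
  define y where "y = x / 2"
  have y: "0 \<le> y" "y \<le> 79 / 50"
    using assms pi_approx(2) by (auto simp: y_def)
  then have "y\<^sup>2 \<le> (79 / 50)\<^sup>2"
    by (intro power_mono) auto
  then have "7 / 12 * y \<le> y * (1 - y\<^sup>2 / 6)"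
    using mult_left_mono[of "7 / 12" "1 - y\<^sup>2 / 6" y] y by (simp add: power2_eq_square mult.commute)
  also have "\<dots> \<le> sin y"
    using x_minus_sin_le_cube[OF y(1)] by (simp add: algebra_simps power2_eq_square power3_eq_cube)
  finally have "(7 / 12 * y)\<^sup>2 \<le> (sin y)\<^sup>2"
    using y by (intro power_mono) auto
  then have "49 * x\<^sup>2 \<le> 576 * (sin y)\<^sup>2"
    by (simp add: y_def power_divide power_mult_distrib)
  moreover have "cos x = 1 - 2 * (sin y)\<^sup>2"
    using cos_double_sin[of y] by (simp add: y_def)
  ultimately show ?thesis
    using zero_le_power2[of x] by (smt (verit))
qed

lemma mul_x_minus_sin_le_one_minus_cos:
  fixes j x :: real
  assumes j: "0 \<le> j" and x: "0 \<le> x" "x \<le> pi"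
  shows "j * (x - sin x) \<le> (4 + j\<^sup>2) * (1 - cos x)"
proof -
  have "x - sin x \<le> x * (x\<^sup>2 / 6)"
    using x_minus_sin_le_cube[OF x(1)] by (simp add: power2_eq_square power3_eq_cube)
  also have "\<dots> \<le> x * (1 - cos x)"
    using square_le_6_one_minus_cos[OF x] x(1) by (intro mult_left_mono) auto
  also have "\<dots> \<le> 4 * (1 - cos x)"
    using x(2) pi_less_4 by (intro mult_right_mono) auto
  finally have "j * (x - sin x) \<le> j * (4 * (1 - cos x))"
    using j by (rule mult_left_mono)
  also have "\<dots> = 4 * j * (1 - cos x)"
    by simp
  also have "\<dots> \<le> (4 + j\<^sup>2) * (1 - cos x)"
    using zero_le_power2[of "j - 2"] by (intro mult_right_mono) (auto simp: power2_eq_square algebra_simps)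
  finally show ?thesis .
qed

lemma abs_radial_term_le:
  fixes u v f1 f2 C e :: real
  assumes u: "0 \<le> u" and v: "0 \<le> v"
    and f1: "\<bar>f1\<bar> \<le> C" and f2: "\<bar>f2\<bar> \<le> C" and df: "\<bar>f2 - f1\<bar> \<le> C * e"
  shows "\<bar>(v - u) * (v * f2 - u * f1)\<bar> \<le> C * (5 * (v - u)\<^sup>2 + u * v * e\<^sup>2 / 16)"
proof -
  define m where "m = min u v"
  have C: "0 \<le> C"
    using f1 by linarith
  have m: "0 \<le> m" "m\<^sup>2 \<le> u * v"
    using u v by (auto simp: m_def min_def power2_eq_square intro: mult_mono)
  have "\<bar>v * f2 - u * f1\<bar> \<le> \<bar>v - u\<bar> * C + m * (C * e)"
  proof (cases "u \<le> v")
    case True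
    have "\<bar>v * f2 - u * f1\<bar> = \<bar>(v - u) * f2 + u * (f2 - f1)\<bar>"
      by (simp add: algebra_simps)
    also have "\<dots> \<le> \<bar>v - u\<bar> * C + u * (C * e)"
      using u f2 df by (auto simp: abs_mult intro!: abs_triangle_ineq[THEN order_trans] add_mono mult_mono)
    finally show ?thesis
      using True by (simp add: m_def)
  next
    case False
    have "\<bar>v * f2 - u * f1\<bar> = \<bar>(v - u) * f1 + v * (f2 - f1)\<bar>"
      by (simp add: algebra_simps)
    also have "\<dots> \<le> \<bar>v - u\<bar> * C + v * (C * e)"
      using v f1 df by (auto simp: abs_mult intro!: abs_triangle_ineq[THEN order_trans] add_mono mult_mono)
    finally show ?thesis
      using False by (simp add: m_def)
  qed
  then have "\<bar>(v - u) * (v * f2 - u * f1)\<bar> \<le> \<bar>v - u\<bar> * (\<bar>v - u\<bar> * C + m * (C * e))"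
    by (simp add: abs_mult mult_left_mono)
  also have "\<dots> \<le> C * ((v - u)\<^sup>2 + \<bar>v - u\<bar> * (m * e))"
    using C m by (simp add: power2_eq_square algebra_simps mult_left_mono)
  also have "\<dots> \<le> C * (5 * (v - u)\<^sup>2 + (m * e)\<^sup>2 / 16)"
  proof -
    have "a * b \<le> 4 * a\<^sup>2 + b\<^sup>2 / 16" for a b :: real
      using zero_le_power2[of "8 * a - b"] by (simp add: power2_eq_square algebra_simps)
    from this[of "\<bar>v - u\<bar>" "m * e"] show ?thesis
      using C by (intro mult_left_mono) auto
  qed
  also have "\<dots> \<le> C * (5 * (v - u)\<^sup>2 + u * v * e\<^sup>2 / 16)"
    using C m by (intro mult_left_mono) (auto simp: power_mult_distrib mult_right_mono)
  finally show ?thesis .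
qed

lemma cone_remainder_near:
  fixes u v C c e j f1 f2 p s :: real
  assumes u: "0 \<le> u" and v: "0 \<le> v" and c: "0 \<le> c"
    and f1: "\<bar>f1\<bar> \<le> C" and f2: "\<bar>f2\<bar> \<le> C"
    and df: "\<bar>f2 - f1\<bar> \<le> C * e" and dp: "\<bar>f2 - f1 - p\<bar> \<le> C * e\<^sup>2"
    and e: "e\<^sup>2 \<le> 6 * j\<^sup>2 * c" and ds: "\<bar>p - s\<bar> \<le> C * (4 + j\<^sup>2) * c"
  shows "\<bar>v\<^sup>2 * f2 + u\<^sup>2 * f1 - 2 * u * v * (1 - c) * f1 - u * v * s\<bar>
    \<le> C * (6 + 4 * j\<^sup>2) * ((v - u)\<^sup>2 + 2 * u * v * c)"
proof -
  define w where "w = u * v"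
  define G where "G = C * w * c"
  define H where "H = G * j\<^sup>2"
  have C: "0 \<le> C"
    using f1 by linarith
  have w: "0 \<le> w"
    using u v by (simp add: w_def)
  have G: "0 \<le> G" and H: "0 \<le> H"
    using C w c by (simp_all add: G_def H_def)
  have "\<bar>(v - u) * (v * f2 - u * f1)\<bar> \<le> C * (5 * (v - u)\<^sup>2 + w * e\<^sup>2 / 16)"
    using abs_radial_term_le[OF u v f1 f2 df] by (simp add: w_def)
  also have "\<dots> \<le> C * (5 * (v - u)\<^sup>2 + w * (6 * j\<^sup>2 * c) / 16)"
    using e C w by (intro mult_left_mono add_left_mono divide_right_mono) auto
  finally have radial: "\<bar>(v - u) * (v * f2 - u * f1)\<bar> \<le> 5 * (C * (v - u)\<^sup>2) + 3 / 8 * H"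
    by (simp add: H_def G_def algebra_simps)
  have "\<bar>w * (f2 - f1 - p)\<bar> \<le> w * (C * (6 * j\<^sup>2 * c))"
    using dp e w C by (auto simp: abs_mult intro!: mult_left_mono order_trans[OF dp])
  then have taylor: "\<bar>w * (f2 - f1 - p)\<bar> \<le> 6 * H"
    by (simp add: H_def G_def algebra_simps)
  have "\<bar>w * (2 * c * f1)\<bar> \<le> w * (2 * c * C)"
    using f1 w c by (simp add: abs_mult mult_left_mono)
  then have curvature: "\<bar>w * (2 * c * f1)\<bar> \<le> 2 * G"
    by (simp add: G_def algebra_simps)
  have "\<bar>w * (p - s)\<bar> \<le> w * (C * (4 + j\<^sup>2) * c)"
    using ds w by (simp add: abs_mult mult_left_mono)
  then have sine: "\<bar>w * (p - s)\<bar> \<le> 4 * G + H"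
    by (simp add: H_def G_def algebra_simps)
  \<comment> \<open>Radial part, Taylor remainder, curvature of the cone, and the sine correction.\<close>
  have "v\<^sup>2 * f2 + u\<^sup>2 * f1 - 2 * u * v * (1 - c) * f1 - u * v * s
      = (v - u) * (v * f2 - u * f1) + w * (f2 - f1 - p) + w * (2 * c * f1) + w * (p - s)"
    by (simp add: w_def algebra_simps power2_eq_square)
  then have "\<bar>v\<^sup>2 * f2 + u\<^sup>2 * f1 - 2 * u * v * (1 - c) * f1 - u * v * s\<bar>
      \<le> 5 * (C * (v - u)\<^sup>2) + 6 * G + 59 / 8 * H"
    using radial taylor curvature sine by linarith
  also have "\<dots> \<le> 6 * (C * (v - u)\<^sup>2) + 4 * (C * j\<^sup>2 * (v - u)\<^sup>2) + 12 * G + 8 * H"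
    using C G H by simp
  also have "\<dots> = C * (6 + 4 * j\<^sup>2) * ((v - u)\<^sup>2 + 2 * u * v * c)"
    by (simp add: G_def H_def w_def algebra_simps)
  finally show ?thesis .
qed

lemma cone_remainder_far:
  fixes u v C j x f1 f2 s :: real
  assumes u: "0 \<le> u" and v: "0 \<le> v"
    and f1: "\<bar>f1\<bar> \<le> C" and f2: "\<bar>f2\<bar> \<le> C" and s: "\<bar>s\<bar> \<le> C * j"
  shows "\<bar>v\<^sup>2 * f2 + u\<^sup>2 * f1 - 2 * u * v * cos x * f1 - u * v * s\<bar> \<le> C * (6 + 4 * j\<^sup>2) * (u + v)\<^sup>2"
proof -
  have C: "0 \<le> C"
    using f1 by linarith
  have "\<bar>v\<^sup>2 * f2 + u\<^sup>2 * f1 - 2 * u * v * cos x * f1 - u * v * s\<bar>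
      \<le> v\<^sup>2 * \<bar>f2\<bar> + u\<^sup>2 * \<bar>f1\<bar> + 2 * u * v * (\<bar>cos x\<bar> * \<bar>f1\<bar>) + u * v * \<bar>s\<bar>"
    using u v
    by (simp add: abs_mult abs_triangle_ineq4[THEN order_trans] abs_triangle_ineq[THEN order_trans])
  also have "\<dots> \<le> v\<^sup>2 * C + u\<^sup>2 * C + 2 * u * v * (1 * C) + u * v * (C * j)"
    using u v f1 f2 s by (intro add_mono mult_left_mono mult_mono) auto
  also have "\<dots> = C * (u + v)\<^sup>2 + C * (u * v * j)"
    by (simp add: power2_eq_square algebra_simps)
  also have "\<dots> \<le> C * (u + v)\<^sup>2 + C * ((u + v)\<^sup>2 * (1 + j\<^sup>2))"
  proof -
    have "u * v * j \<le> u * v * (1 + j\<^sup>2)"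
      using u v zero_le_power2[of "j - 1 / 2"]
      by (intro mult_left_mono) (auto simp: power2_eq_square algebra_simps)
    also have "\<dots> \<le> (u + v)\<^sup>2 * (1 + j\<^sup>2)"
      using u v by (intro mult_right_mono) (auto simp: power2_eq_square algebra_simps)
    finally show ?thesis
      using C by (intro add_left_mono mult_left_mono)
  qed
  also have "\<dots> \<le> C * (6 + 4 * j\<^sup>2) * (u + v)\<^sup>2"
    using C by (simp add: algebra_simps mult_left_mono)
  finally show ?thesis .
qed

lemma cone_remainder_bound:
  fixes u v C j x f1 f2 p s :: real
  assumes u: "0 \<le> u" and v: "0 \<le> v" and j: "0 \<le> j" and x: "0 \<le> x"
    and f1: "\<bar>f1\<bar> \<le> C" and f2: "\<bar>f2\<bar> \<le> C"
    and df: "\<bar>f2 - f1\<bar> \<le> C * (j * x)" and dp: "\<bar>f2 - f1 - p\<bar> \<le> C * (j * x)\<^sup>2"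
    and ds: "\<bar>p - s\<bar> \<le> C * j * (x - sin x)" and s: "\<bar>s\<bar> \<le> C * j"
  shows "\<bar>v\<^sup>2 * f2 + u\<^sup>2 * f1 - 2 * u * v * cos x * f1 - u * v * s\<bar>
    \<le> C * (6 + 4 * j\<^sup>2) * (u\<^sup>2 + v\<^sup>2 - 2 * u * v * cos (min x pi))"
proof (cases "x \<le> pi")
  case True
  have C: "0 \<le> C"
    using f1 by linarith
  have e: "(j * x)\<^sup>2 \<le> 6 * j\<^sup>2 * (1 - cos x)"
    using mult_left_mono[OF square_le_6_one_minus_cos[OF x True], of "j\<^sup>2"]
    by (simp add: power_mult_distrib algebra_simps)
  have "\<bar>p - s\<bar> \<le> C * (4 + j\<^sup>2) * (1 - cos x)"
    using order_trans[OF ds[unfolded mult.assoc]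
        mult_left_mono[OF mul_x_minus_sin_le_one_minus_cos[OF j x True] C]]
    by (simp add: mult.assoc)
  from cone_remainder_near[where c = "1 - cos x" and j = j and s = s, OF u v _ f1 f2 df dp e this]
  have "\<bar>v\<^sup>2 * f2 + u\<^sup>2 * f1 - 2 * u * v * cos x * f1 - u * v * s\<bar>
      \<le> C * (6 + 4 * j\<^sup>2) * ((v - u)\<^sup>2 + 2 * u * v * (1 - cos x))"
    by (simp add: mult.assoc)
  moreover have "(v - u)\<^sup>2 + 2 * u * v * (1 - cos x) = u\<^sup>2 + v\<^sup>2 - 2 * u * v * cos (min x pi)"
    using True by (simp add: power2_eq_square algebra_simps)
  ultimately show ?thesis
    by simp
next
  case False
  \<comment> \<open>Beyond the angle \<pi> the cone distance saturates at u + v.\<close>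
  then show ?thesis
    using cone_remainder_far[OF u v f1 f2 s, of x] by (simp add: power2_eq_square algebra_simps)
qed

section \<open>Taylor bounds on a convex set\<close>

lemma abs_diff_le_of_norm_grad_le:
  fixes \<phi> :: "'a::real_inner \<Rightarrow> real"
  assumes "convex X"
    and "\<And>x. (\<phi> has_derivative (\<lambda>h. inner (grad x) h)) (at x)"
    and "\<And>x. x \<in> X \<Longrightarrow> norm (grad x) \<le> C"
    and "x1 \<in> X" "x2 \<in> X"
  shows "\<bar>\<phi> x2 - \<phi> x1\<bar> \<le> C * norm (x2 - x1)"
proof -
  have "norm (\<phi> x2 - \<phi> x1) \<le> C * norm (x2 - x1)"
  proof (rule differentiable_bound[OF assms(1) _ _ assms(5,4)])
    show "(\<phi> has_derivative (\<lambda>h. inner (grad x) h)) (at x within X)" for x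
      using assms(2) by (rule has_derivative_at_withinI)
    show "onorm (\<lambda>h. inner (grad x) h) \<le> C" if "x \<in> X" for x
    proof (rule onorm_bound)
      show "0 \<le> C"
        using order_trans[OF norm_ge_zero assms(3)[OF that]] .
      show "norm (inner (grad x) h) \<le> C * norm h" for h
        using Cauchy_Schwarz_ineq2[of "grad x" h] mult_right_mono[OF assms(3)[OF that] norm_ge_zero[of h]]
        by simp
    qed
  qed
  then show ?thesis
    by simp
qed

lemma abs_first_order_remainder_le:
  fixes \<phi> :: "'a::real_inner \<Rightarrow> real"
  assumes X: "convex X"
    and d\<phi>: "\<And>x. (\<phi> has_derivative (\<lambda>h. inner (grad x) h)) (at x)"
    and dgrad: "\<And>x. (grad has_derivative blinfun_apply (hess x)) (at x)"
    and hess: "\<And>x. x \<in> X \<Longrightarrow> norm (hess x) \<le> C"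
    and x1: "x1 \<in> X" and x2: "x2 \<in> X"
  shows "\<bar>\<phi> x2 - \<phi> x1 - inner (grad x1) (x2 - x1)\<bar> \<le> C * (norm (x2 - x1))\<^sup>2"
proof -
  have grad_lipschitz: "norm (grad y - grad x1) \<le> C * norm (x2 - x1)"
    if "y \<in> closed_segment x1 x2" for y
  proof -
    have "y \<in> X"
      using closed_segment_subset[OF x1 x2 X] that by auto
    have "norm (grad y - grad x1) \<le> C * norm (y - x1)"
    proof (rule differentiable_bound[OF X _ _ \<open>y \<in> X\<close> x1])
      show "(grad has_derivative blinfun_apply (hess x)) (at x within X)" for x
        using dgrad by (rule has_derivative_at_withinI)
      show "onorm (blinfun_apply (hess x)) \<le> C" if "x \<in> X" for x
        using hess[OF that] by (simp add: norm_blinfun.rep_eq)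
    qed
    also have "\<dots> \<le> C * norm (x2 - x1)"
      using order_trans[OF norm_ge_zero hess[OF x1]] segment_bound(1)[OF that]
      by (intro mult_left_mono) auto
    finally show ?thesis .
  qed
  define g where "g y = \<phi> y - inner (grad x1) y" for y
  have "norm (g x2 - g x1) \<le> C * norm (x2 - x1) * norm (x2 - x1)"
  proof (rule differentiable_bound[of "closed_segment x1 x2" g "\<lambda>y h. inner (grad y - grad x1) h"])
    show "(g has_derivative (\<lambda>h. inner (grad y - grad x1) h)) (at y within closed_segment x1 x2)" for y
      unfolding g_def inner_diff_left
      by (rule has_derivative_at_withinI)
        (intro has_derivative_diff d\<phi> bounded_linear.has_derivative[OF bounded_linear_inner_right]
          has_derivative_ident)
    show "onorm (\<lambda>h. inner (grad y - grad x1) h) \<le> C * norm (x2 - x1)"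
      if "y \<in> closed_segment x1 x2" for y
    proof (rule onorm_bound)
      show "0 \<le> C * norm (x2 - x1)"
        using order_trans[OF norm_ge_zero grad_lipschitz[OF that]] .
      show "norm (inner (grad y - grad x1) h) \<le> C * norm (x2 - x1) * norm h" for h
        using Cauchy_Schwarz_ineq2[of "grad y - grad x1" h]
          mult_right_mono[OF grad_lipschitz[OF that] norm_ge_zero[of h]]
        by simp
    qed
  qed auto
  then show ?thesis
    by (simp add: g_def inner_diff_right power2_eq_square algebra_simps)
qed

section \<open>The pointwise remainder on the cone\<close>

lemma law_of_cosines_bounds:
  fixes a b t :: real
  shows "0 \<le> a\<^sup>2 + b\<^sup>2 - 2 * a * b * cos t" and "a\<^sup>2 + b\<^sup>2 - 2 * a * b * cos t \<le> 2 * (a\<^sup>2 + b\<^sup>2)"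
proof -
  have "\<bar>2 * a * b * cos t\<bar> \<le> 2 * \<bar>a\<bar> * \<bar>b\<bar>"
    by (simp add: abs_mult mult_left_le)
  also have "\<dots> \<le> a\<^sup>2 + b\<^sup>2"
    using sum_squares_bound[of "\<bar>a\<bar>" "\<bar>b\<bar>"] by simp
  finally show "0 \<le> a\<^sup>2 + b\<^sup>2 - 2 * a * b * cos t" and "a\<^sup>2 + b\<^sup>2 - 2 * a * b * cos t \<le> 2 * (a\<^sup>2 + b\<^sup>2)"
    by (simp_all add: abs_le_iff)
qed

lemma cone_dist_sq:
  assumes "0 < \<Sigma>"
  shows "(cone_dist \<Lambda> \<Sigma> p q)\<^sup>2 = 4 / \<Sigma> * ((snd p)\<^sup>2 + (snd q)\<^sup>2
    - 2 * snd p * snd q * cos (min (sqrt (\<Sigma> / (4 * \<Lambda>)) * norm (fst p - fst q)) pi))"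
  unfolding cone_dist_def using assms
  by (intro real_sqrt_pow2 mult_nonneg_nonneg law_of_cosines_bounds(1)) auto

lemma cone_dist_sq_le:
  assumes "0 < \<Sigma>"
  shows "(cone_dist \<Lambda> \<Sigma> p q)\<^sup>2 \<le> 8 / \<Sigma> * ((snd p)\<^sup>2 + (snd q)\<^sup>2)"
  using mult_left_mono[OF law_of_cosines_bounds(2), of "4 / \<Sigma>"] assms by (simp add: cone_dist_sq)

lemma inner_S_LS_bounds:
  fixes g x y :: "'a::real_inner"
  assumes \<Lambda>: "0 < \<Lambda>" and \<Sigma>: "0 < \<Sigma>" and g: "norm g \<le> C"
  defines "j \<equiv> sqrt (4 * \<Lambda> / \<Sigma>)" and "\<theta> \<equiv> sqrt (\<Sigma> / (4 * \<Lambda>)) * norm (x - y)"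
  shows "\<bar>inner g (y - x) - j * inner (S_LS \<Lambda> \<Sigma> x y) g\<bar> \<le> C * j * (\<theta> - sin \<theta>)"
    and "\<bar>j * inner (S_LS \<Lambda> \<Sigma> x y) g\<bar> \<le> C * j"
proof -
  have j: "0 < j" and kj: "sqrt (\<Sigma> / (4 * \<Lambda>)) * j = 1"
    using \<Lambda> \<Sigma> by (simp_all add: j_def real_sqrt_mult[symmetric] field_simps)
  have C: "0 \<le> C"
    using order_trans[OF norm_ge_zero g] .
  have norm_diff: "norm (y - x) = j * \<theta>"
    using kj by (simp add: \<theta>_def norm_minus_commute algebra_simps)
  have p: "\<bar>inner g (y - x)\<bar> \<le> C * (j * \<theta>)"
    using Cauchy_Schwarz_ineq2[of g "y - x"] mult_right_mono[OF g norm_ge_zero[of "y - x"]]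
    by (simp add: norm_diff)
  have "\<bar>inner g (y - x) - j * inner (S_LS \<Lambda> \<Sigma> x y) g\<bar> \<le> C * j * (\<theta> - sin \<theta>)
    \<and> \<bar>j * inner (S_LS \<Lambda> \<Sigma> x y) g\<bar> \<le> C * j"
  proof (cases "x = y")
    case True
    then show ?thesis
      using C j by (simp add: S_LS_def \<theta>_def)
  next
    case False
    then have \<theta>: "0 < \<theta>"
      using \<Lambda> \<Sigma> by (simp add: \<theta>_def)
    have "S_LS \<Lambda> \<Sigma> x y = (sin \<theta> / (j * \<theta>)) *\<^sub>R (y - x)"
      unfolding S_LS_def \<theta>_def[symmetric] using False norm_diff by (simp add: norm_minus_commute)
    then have s: "j * inner (S_LS \<Lambda> \<Sigma> x y) g = sin \<theta> / \<theta> * inner g (y - x)"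
      using j by (simp add: inner_commute)
    have "inner g (y - x) - j * inner (S_LS \<Lambda> \<Sigma> x y) g = (\<theta> - sin \<theta>) / \<theta> * inner g (y - x)"
      using \<theta> by (simp add: s field_simps)
    moreover have "0 \<le> \<theta> - sin \<theta>"
      using \<theta> sin_x_le_x[of \<theta>] by simp
    ultimately have "\<bar>inner g (y - x) - j * inner (S_LS \<Lambda> \<Sigma> x y) g\<bar> = (\<theta> - sin \<theta>) / \<theta> * \<bar>inner g (y - x)\<bar>"
      using \<theta> by (simp add: abs_mult)
    also have "\<dots> \<le> (\<theta> - sin \<theta>) / \<theta> * (C * (j * \<theta>))"
      using \<theta> sin_x_le_x[of \<theta>] p by (intro mult_left_mono) auto
    moreover have "\<bar>j * inner (S_LS \<Lambda> \<Sigma> x y) g\<bar> = \<bar>sin \<theta>\<bar> / \<theta> * \<bar>inner g (y - x)\<bar>"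
      using \<theta> by (simp add: s abs_mult)
    moreover have "\<dots> \<le> 1 / \<theta> * (C * (j * \<theta>))"
      using \<theta> p by (intro mult_mono divide_right_mono) auto
    ultimately show ?thesis
      using \<theta> by (simp add: mult_ac)
  qed
  then show "\<bar>inner g (y - x) - j * inner (S_LS \<Lambda> \<Sigma> x y) g\<bar> \<le> C * j * (\<theta> - sin \<theta>)"
    and "\<bar>j * inner (S_LS \<Lambda> \<Sigma> x y) g\<bar> \<le> C * j"
    by auto
qed

definition F_integrand :: "real \<Rightarrow> real \<Rightarrow> ('a::real_inner \<Rightarrow> real) \<Rightarrow> ('a \<Rightarrow> 'a)
    \<Rightarrow> ('a \<times> real) \<times> ('a \<times> real) \<Rightarrow> real" where
  "F_integrand \<Lambda> \<Sigma> \<phi> grad pq = (case pq of ((x1, r1), (x2, r2)) \<Rightarrow>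
      - 2 * r1\<^sup>2 * \<phi> x1 + 2 * r1 * r2 * \<phi> x1 * cos (sqrt (\<Sigma> / (4 * \<Lambda>)) * norm (x1 - x2))
      + r1 * r2 * sqrt (4 * \<Lambda> / \<Sigma>) * inner (S_LS \<Lambda> \<Sigma> x1 x2) (grad x1))"

lemma F_functional_eq: "F_functional \<Lambda> \<Sigma> \<phi> grad \<beta> = 4 / \<Sigma> * (\<integral>pq. F_integrand \<Lambda> \<Sigma> \<phi> grad pq \<partial>\<beta>)"
  by (simp add: F_functional_def F_integrand_def)

lemma cone_integrand_remainder_bound:
  fixes \<phi> :: "'a::real_inner \<Rightarrow> real"
  assumes X: "convex X" and \<Lambda>: "0 < \<Lambda>" and \<Sigma>: "0 < \<Sigma>"
    and d\<phi>: "\<And>x. (\<phi> has_derivative (\<lambda>h. inner (grad x) h)) (at x)"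
    and dgrad: "\<And>x. (grad has_derivative blinfun_apply (hess x)) (at x)"
    and bound: "\<And>x. x \<in> X \<Longrightarrow> \<bar>\<phi> x\<bar> + norm (grad x) + norm (hess x) \<le> C"
    and x1: "x1 \<in> X" and x2: "x2 \<in> X" and r1: "0 \<le> r1" and r2: "0 \<le> r2"
  shows "4 / \<Sigma> * \<bar>r2\<^sup>2 * \<phi> x2 - r1\<^sup>2 * \<phi> x1 - F_integrand \<Lambda> \<Sigma> \<phi> grad ((x1, r1), (x2, r2))\<bar>
    \<le> C * (6 + 16 * \<Lambda> / \<Sigma>) * (cone_dist \<Lambda> \<Sigma> (x1, r1) (x2, r2))\<^sup>2"
proof -
  define j where "j = sqrt (4 * \<Lambda> / \<Sigma>)"
  define \<theta> where "\<theta> = sqrt (\<Sigma> / (4 * \<Lambda>)) * norm (x1 - x2)"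
  have \<phi>_bound: "\<bar>\<phi> x\<bar> \<le> C" and grad_bound: "norm (grad x) \<le> C" and hess_bound: "norm (hess x) \<le> C"
    if "x \<in> X" for x
    using bound[OF that] norm_ge_zero[of "grad x"] norm_ge_zero[of "hess x"] by linarith+
  have j: "0 \<le> j" and j2: "j\<^sup>2 = 4 * \<Lambda> / \<Sigma>" and \<theta>: "0 \<le> \<theta>"
    using \<Lambda> \<Sigma> by (simp_all add: j_def \<theta>_def)
  have norm_diff: "norm (x2 - x1) = j * \<theta>"
    using \<Lambda> \<Sigma> by (simp add: j_def \<theta>_def norm_minus_commute real_sqrt_mult[symmetric] field_simps)
  have df: "\<bar>\<phi> x2 - \<phi> x1\<bar> \<le> C * (j * \<theta>)"
    using abs_diff_le_of_norm_grad_le[OF X d\<phi> grad_bound x1 x2] by (simp add: norm_diff)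
  have dp: "\<bar>\<phi> x2 - \<phi> x1 - inner (grad x1) (x2 - x1)\<bar> \<le> C * (j * \<theta>)\<^sup>2"
    using abs_first_order_remainder_le[OF X d\<phi> dgrad hess_bound x1 x2] by (simp add: norm_diff)
  note S_LS_bounds =
    inner_S_LS_bounds[where x = x1 and y = x2, OF \<Lambda> \<Sigma> grad_bound[OF x1], folded j_def \<theta>_def]
  have "\<bar>r2\<^sup>2 * \<phi> x2 + r1\<^sup>2 * \<phi> x1 - 2 * r1 * r2 * \<phi> x1 * cos \<theta>
      - r1 * r2 * j * inner (S_LS \<Lambda> \<Sigma> x1 x2) (grad x1)\<bar>
      \<le> C * (6 + 4 * j\<^sup>2) * (r1\<^sup>2 + r2\<^sup>2 - 2 * r1 * r2 * cos (min \<theta> pi))"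
    using cone_remainder_bound[OF r1 r2 j \<theta> \<phi>_bound[OF x1] \<phi>_bound[OF x2] df dp S_LS_bounds]
    by (simp add: algebra_simps)
  then have "4 / \<Sigma> * \<bar>r2\<^sup>2 * \<phi> x2 + r1\<^sup>2 * \<phi> x1 - 2 * r1 * r2 * \<phi> x1 * cos \<theta>
      - r1 * r2 * j * inner (S_LS \<Lambda> \<Sigma> x1 x2) (grad x1)\<bar>
      \<le> 4 / \<Sigma> * (C * (6 + 4 * j\<^sup>2) * (r1\<^sup>2 + r2\<^sup>2 - 2 * r1 * r2 * cos (min \<theta> pi)))"
    using \<Sigma> by (intro mult_left_mono) auto
  also have "\<dots> = C * (6 + 16 * \<Lambda> / \<Sigma>) * (4 / \<Sigma> * (r1\<^sup>2 + r2\<^sup>2 - 2 * r1 * r2 * cos (min \<theta> pi)))"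
    by (simp add: j2)
  also have "4 / \<Sigma> * (r1\<^sup>2 + r2\<^sup>2 - 2 * r1 * r2 * cos (min \<theta> pi)) = (cone_dist \<Lambda> \<Sigma> (x1, r1) (x2, r2))\<^sup>2"
    by (simp add: cone_dist_sq[OF \<Sigma>] \<theta>_def)
  also have "r2\<^sup>2 * \<phi> x2 + r1\<^sup>2 * \<phi> x1 - 2 * r1 * r2 * \<phi> x1 * cos \<theta>
      - r1 * r2 * j * inner (S_LS \<Lambda> \<Sigma> x1 x2) (grad x1)
      = r2\<^sup>2 * \<phi> x2 - r1\<^sup>2 * \<phi> x1 - F_integrand \<Lambda> \<Sigma> \<phi> grad ((x1, r1), (x2, r2))"
    by (simp add: F_integrand_def \<theta>_def j_def)
  finally show ?thesis .
qed

section \<open>Integrals against a smaller measure\<close>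

lemma integral_mono_measure_nonneg:
  fixes h :: "'a \<Rightarrow> real"
  assumes sets: "sets N = sets M" and le: "N \<le> M"
    and h: "integrable M h" and nonneg: "\<And>x. 0 \<le> h x"
  shows "(\<integral>x. h x \<partial>N) \<le> (\<integral>x. h x \<partial>M)"
proof -
  have h_M: "h \<in> borel_measurable M"
    using h by (rule borel_measurable_integrable)
  then have h_N: "h \<in> borel_measurable N"
    by (subst measurable_cong_sets[OF sets refl])
  have "(\<integral>x. h x \<partial>N) = enn2real (\<integral>\<^sup>+x. ennreal (h x) \<partial>N)"
    by (rule integral_eq_nn_integral[OF h_N]) (simp add: nonneg)
  also have "\<dots> \<le> enn2real (\<integral>\<^sup>+x. ennreal (h x) \<partial>M)"
  proof (rule enn2real_mono)
    show "(\<integral>\<^sup>+x. ennreal (h x) \<partial>N) \<le> (\<integral>\<^sup>+x. ennreal (h x) \<partial>M)"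
      by (rule nn_integral_mono_measure[OF sets le])
    show "(\<integral>\<^sup>+x. ennreal (h x) \<partial>M) < top"
      using nn_integral_eq_integral[OF h] nonneg by simp
  qed
  also have "\<dots> = (\<integral>x. h x \<partial>M)"
    by (rule integral_eq_nn_integral[OF h_M, symmetric]) (simp add: nonneg)
  finally show ?thesis .
qed

lemma integrable_abs_integral_le_AE:
  fixes f g :: "'a \<Rightarrow> real"
  assumes g: "integrable M g" and f: "f \<in> borel_measurable M" and bound: "AE x in M. \<bar>f x\<bar> \<le> g x"
  shows "integrable M f" and "\<bar>\<integral>x. f x \<partial>M\<bar> \<le> (\<integral>x. g x \<partial>M)"
proof -
  show f_int: "integrable M f"
    using g f by (rule Bochner_Integration.integrable_bound) (use bound in \<open>auto elim: eventually_mono\<close>)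
  have "\<bar>\<integral>x. f x \<partial>M\<bar> \<le> (\<integral>x. \<bar>f x\<bar> \<partial>M)"
    using integral_norm_bound[of M f] by simp
  also have "\<dots> \<le> (\<integral>x. g x \<partial>M)"
    using f_int g bound by (intro integral_mono_AE) auto
  finally show "\<bar>\<integral>x. f x \<partial>M\<bar> \<le> (\<integral>x. g x \<partial>M)" .
qed

lemma borel_measurable_has_derivative:
  fixes f :: "'a::real_normed_vector \<Rightarrow> 'b::real_normed_vector"
  assumes "\<And>x. (f has_derivative f' x) (at x)"
  shows "f \<in> borel_measurable borel"
  using assms
  by (intro borel_measurable_continuous_onI continuous_at_imp_continuous_on ballI has_derivative_continuous)

lemma finite_measure_mono_measure:
  assumes "finite_measure M" and "N \<le> M" and "sets N = sets M"
  shows "finite_measure N"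
proof (rule finite_measureI)
  have "emeasure N (space N) \<le> emeasure M (space M)"
    using le_measureD3[OF assms(2,3)] sets_eq_imp_space_eq[OF assms(3)] by simp
  then show "emeasure N (space N) \<noteq> \<infinity>"
    using finite_measure.emeasure_finite[OF assms(1)] by (auto simp: top_unique)
qed

lemma AE_mono_measure:
  assumes "N \<le> M" and "sets N = sets M" and "AE x in M. P x"
  shows "AE x in N. P x"
proof -
  from assms(3) obtain A where "{x \<in> space M. \<not> P x} \<subseteq> A" "emeasure M A = 0" "A \<in> sets M"
    by (rule AE_E)
  then show ?thesis
    using le_measureD3[OF assms(1,2), of A] sets_eq_imp_space_eq[OF assms(2)] assms(2)
    by (intro AE_I[where N = A]) auto
qed

lemma integral_indicator_mult_affine:
  fixes f :: "'a \<Rightarrow> real"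
  assumes fin: "finite_measure K" and X: "X \<in> sets K" and AE_X: "AE x in K. x \<in> X"
    and f: "f \<in> borel_measurable K" and bound: "\<And>x. x \<in> X \<Longrightarrow> \<bar>f x\<bar> \<le> C"
  shows "integrable K (\<lambda>x. indicator X x * (C + \<sigma> * f x))"
    and "(\<integral>x. indicator X x * (C + \<sigma> * f x) \<partial>K) = C * measure K X + \<sigma> * (\<integral>x. f x \<partial>K)"
proof -
  define g where "g = (\<lambda>x. indicator X x * f x)"
  have g: "g \<in> borel_measurable K"
    unfolding g_def by (intro borel_measurable_times borel_measurable_indicator f X)
  have "\<bar>g x\<bar> \<le> \<bar>C\<bar>" for x
    using bound[of x] abs_ge_self[of C] by (auto simp: g_def indicator_def)
  then have "integrable K g"
    using g by (intro finite_measure.integrable_const_bound[OF fin, of _ "\<bar>C\<bar>"] AE_I2) auto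
  moreover have "integrable K (\<lambda>x. C * indicator X x)"
    using X finite_measure.emeasure_finite[OF fin] by (simp add: less_top)
  moreover have "(\<lambda>x. indicator X x * (C + \<sigma> * f x)) = (\<lambda>x. C * indicator X x + \<sigma> * g x)"
    by (auto simp: g_def fun_eq_iff algebra_simps)
  moreover have "(\<integral>x. g x \<partial>K) = (\<integral>x. f x \<partial>K)"
    by (rule integral_cong_AE[OF g f]) (use AE_X in \<open>auto simp: g_def elim: eventually_mono\<close>)
  ultimately show "integrable K (\<lambda>x. indicator X x * (C + \<sigma> * f x))"
    and "(\<integral>x. indicator X x * (C + \<sigma> * f x) \<partial>K) = C * measure K X + \<sigma> * (\<integral>x. f x \<partial>K)"
    using X by (simp_all add: sets.Int_space_eq2)
qed

lemma abs_integral_diff_le_measure_diff: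
  fixes f :: "'a \<Rightarrow> real"
  assumes sets: "sets N = sets M" and le: "N \<le> M" and fin: "finite_measure M"
    and X: "X \<in> sets M" and AE_X: "AE x in M. x \<in> X"
    and f: "f \<in> borel_measurable M" and bound: "\<And>x. x \<in> X \<Longrightarrow> \<bar>f x\<bar> \<le> C"
  shows "\<bar>(\<integral>x. f x \<partial>M) - (\<integral>x. f x \<partial>N)\<bar> \<le> C * (measure M X - measure N X)"
proof -
  have fin_N: "finite_measure N"
    using fin le sets by (rule finite_measure_mono_measure)
  have AE_X_N: "AE x in N. x \<in> X"
    using le sets AE_X by (rule AE_mono_measure)
  have X_N: "X \<in> sets N" and f_N: "f \<in> borel_measurable N"
    using X f sets by (simp_all add: measurable_cong_sets[OF sets refl])
  note M_affine = integral_indicator_mult_affine[OF fin X AE_X f bound]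
  note N_affine = integral_indicator_mult_affine[OF fin_N X_N AE_X_N f_N bound]
  have "C * measure N X + \<sigma> * (\<integral>x. f x \<partial>N) \<le> C * measure M X + \<sigma> * (\<integral>x. f x \<partial>M)"
    if "\<sigma> = 1 \<or> \<sigma> = -1" for \<sigma>
  proof -
    have "0 \<le> indicator X x * (C + \<sigma> * f x)" for x
      using bound[of x] that by (auto simp: indicator_def abs_le_iff)
    then have "(\<integral>x. indicator X x * (C + \<sigma> * f x) \<partial>N) \<le> (\<integral>x. indicator X x * (C + \<sigma> * f x) \<partial>M)"
      using M_affine(1) by (intro integral_mono_measure_nonneg[OF sets le]) auto
    then show ?thesis
      using M_affine(2) N_affine(2) by simp
  qed
  from this[of 1] this[of "-1"] show ?thesis
    by (simp add: abs_le_iff algebra_simps)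
qed

section \<open>Measures on the cone\<close>

lemma measurable_fst_borel [measurable]:
  "fst \<in> (borel :: ('a::topological_space \<times> 'b::topological_space) measure) \<rightarrow>\<^sub>M borel"
  by (intro borel_measurable_continuous_onI continuous_on_fst continuous_on_id)

lemma measurable_snd_borel [measurable]:
  "snd \<in> (borel :: ('a::topological_space \<times> 'b::topological_space) measure) \<rightarrow>\<^sub>M borel"
  by (intro borel_measurable_continuous_onI continuous_on_snd continuous_on_id)

text \<open>The case distinction in S_LS is immaterial, since both branches vanish for x = y; the
  uniform form below is the one the measurability prover can handle.\<close>

lemma S_LS_eq: "S_LS \<Lambda> \<Sigma> x y = (sin (sqrt (\<Sigma> / (4 * \<Lambda>)) * norm (x - y)) / norm (x - y)) *\<^sub>R (y - x)"
  by (simp add: S_LS_def)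

lemma measurable_F_integrand [measurable]:
  fixes \<phi> :: "'a::{real_inner, second_countable_topology} \<Rightarrow> real"
  assumes [measurable]: "\<phi> \<in> borel_measurable borel" "grad \<in> borel_measurable borel"
  shows "F_integrand \<Lambda> \<Sigma> \<phi> grad \<in> borel_measurable borel"
  unfolding F_integrand_def[abs_def] case_prod_beta S_LS_eq by measurable

lemma integral_hmap:
  fixes f :: "'a::topological_space \<Rightarrow> real"
  assumes [measurable_cong]: "sets \<alpha> = sets borel" and [measurable]: "f \<in> borel_measurable borel"
  shows "(\<integral>x. f x \<partial>hmap \<alpha>) = (\<integral>p. (snd p)\<^sup>2 * f (fst p) \<partial>\<alpha>)"
proof -
  have "(\<integral>x. f x \<partial>hmap \<alpha>) = (\<integral>p. f (fst p) \<partial>density \<alpha> (\<lambda>p. ennreal ((snd p)\<^sup>2)))"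
    unfolding hmap_def by (rule integral_distr) measurable
  also have "\<dots> = (\<integral>p. (snd p)\<^sup>2 *\<^sub>R f (fst p) \<partial>\<alpha>)"
    by (rule integral_density) auto
  finally show ?thesis
    by simp
qed

lemma AE_cone_support:
  assumes "cone_meas X \<alpha>" and "closed X"
  shows "AE p in \<alpha>. fst p \<in> X \<and> 0 \<le> snd p"
proof (rule AE_I')
  have "closed (X \<times> {0::real..})"
    using assms(2) by (intro closed_Times) auto
  then show "UNIV - X \<times> {0..} \<in> null_sets \<alpha>"
    using assms(1) by (auto simp: cone_meas_def null_sets_def)
qed (auto simp: mem_Times_iff)

lemma HK_admissible_AE_support:
  assumes "HK_admissible \<Lambda> \<Sigma> X \<mu>1 \<mu>2 \<beta>" and "closed X"
  shows "AE pq in \<beta>. fst (fst pq) \<in> X \<and> 0 \<le> snd (fst pq) \<and> fst (snd pq) \<in> X \<and> 0 \<le> snd (snd pq)"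
proof -
  have [measurable_cong]: "sets \<beta> = sets borel"
    and fst_support: "cone_meas X (distr \<beta> borel fst)" and snd_support: "cone_meas X (distr \<beta> borel snd)"
    using assms(1) by (auto simp: HK_admissible_def cone_M2_def marg1_def marg2_def)
  have [measurable]: "X \<in> sets borel"
    using assms(2) by (rule borel_closed)
  have "fst \<in> \<beta> \<rightarrow>\<^sub>M borel" "snd \<in> \<beta> \<rightarrow>\<^sub>M borel"
    and support: "{p :: 'a \<times> real \<in> space borel. fst p \<in> X \<and> 0 \<le> snd p} \<in> sets borel"
    by measurable
  from this(1,2)[THEN AE_distr_iff, OF support]
  have "AE pq in \<beta>. fst (fst pq) \<in> X \<and> 0 \<le> snd (fst pq)"
    and "AE pq in \<beta>. fst (snd pq) \<in> X \<and> 0 \<le> snd (snd pq)"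
    using AE_cone_support[OF fst_support assms(2)] AE_cone_support[OF snd_support assms(2)] by simp_all
  then show ?thesis
    by eventually_elim auto
qed

lemma integrable_cone_weighted:
  fixes \<psi> :: "'a::real_normed_vector \<Rightarrow> real"
  assumes \<alpha>: "cone_M2 \<Lambda> \<Sigma> X \<alpha>" and X: "closed X" and \<Sigma>: "0 < \<Sigma>"
    and [measurable]: "\<psi> \<in> borel_measurable borel" and bound: "\<And>x. x \<in> X \<Longrightarrow> \<bar>\<psi> x\<bar> \<le> B"
  shows "integrable \<alpha> (\<lambda>p. (snd p)\<^sup>2 * \<psi> (fst p))"
proof -
  have [measurable_cong]: "sets \<alpha> = sets borel"
    using \<alpha> by (simp add: cone_M2_def cone_meas_def)
  have support: "AE p in \<alpha>. fst p \<in> X \<and> 0 \<le> snd p"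
    using \<alpha> X by (intro AE_cone_support) (simp_all add: cone_M2_def)
  have "integrable \<alpha> (\<lambda>p. 4 / \<Sigma> * (snd p)\<^sup>2)"
    using \<alpha> \<Sigma> by (simp add: cone_M2_def cone_dist_sq)
  then have "integrable \<alpha> (\<lambda>p. B * \<Sigma> / 4 * (4 / \<Sigma> * (snd p)\<^sup>2))"
    by (rule integrable_mult_right)
  then have "integrable \<alpha> (\<lambda>p. B * (snd p)\<^sup>2)"
    using \<Sigma> by simp
  then show ?thesis
  proof (rule Bochner_Integration.integrable_bound)
    show "AE p in \<alpha>. norm ((snd p)\<^sup>2 * \<psi> (fst p)) \<le> norm (B * (snd p)\<^sup>2)"
      using support
    proof eventually_elim
      case (elim p)
      then have "\<bar>(snd p)\<^sup>2 * \<psi> (fst p)\<bar> \<le> (snd p)\<^sup>2 * B"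
        using bound[of "fst p"] by (simp add: abs_mult mult_left_mono)
      also have "\<dots> \<le> \<bar>B * (snd p)\<^sup>2\<bar>"
        by (simp add: abs_mult mult.commute mult_right_mono)
      finally show ?case
        by simp
    qed
  qed measurable
qed

lemma HK_admissible_integrable_weighted:
  fixes \<psi> :: "'a::real_normed_vector \<Rightarrow> real"
  assumes \<beta>: "HK_admissible \<Lambda> \<Sigma> X \<mu>1 \<mu>2 \<beta>" and X: "closed X" and \<Sigma>: "0 < \<Sigma>"
    and \<psi>: "\<psi> \<in> borel_measurable borel" and bound: "\<And>x. x \<in> X \<Longrightarrow> \<bar>\<psi> x\<bar> \<le> B"
  shows "integrable \<beta> (\<lambda>pq. (snd (fst pq))\<^sup>2 * \<psi> (fst (fst pq)))"
    and "integrable \<beta> (\<lambda>pq. (snd (snd pq))\<^sup>2 * \<psi> (fst (snd pq)))"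
proof -
  have [measurable_cong]: "sets \<beta> = sets borel"
    using \<beta> by (simp add: HK_admissible_def)
  note [measurable] = \<psi>
  show "integrable \<beta> (\<lambda>pq. (snd (fst pq))\<^sup>2 * \<psi> (fst (fst pq)))"
    using integrable_cone_weighted[OF _ X \<Sigma> \<psi> bound] \<beta>
    by (subst integrable_distr_eq[of fst \<beta> borel "\<lambda>p. (snd p)\<^sup>2 * \<psi> (fst p)", symmetric])
      (auto simp: HK_admissible_def marg1_def)
  show "integrable \<beta> (\<lambda>pq. (snd (snd pq))\<^sup>2 * \<psi> (fst (snd pq)))"
    using integrable_cone_weighted[OF _ X \<Sigma> \<psi> bound] \<beta>
    by (subst integrable_distr_eq[of snd \<beta> borel "\<lambda>p. (snd p)\<^sup>2 * \<psi> (fst p)", symmetric])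
      (auto simp: HK_admissible_def marg2_def)
qed

lemma HK_admissible_integrable_cone_dist_sq:
  fixes \<beta> :: "(('a::{real_normed_vector, second_countable_topology} \<times> real) \<times> ('a \<times> real)) measure"
  assumes \<beta>: "HK_admissible \<Lambda> \<Sigma> X \<mu>1 \<mu>2 \<beta>" and X: "closed X" and \<Sigma>: "0 < \<Sigma>"
  shows "integrable \<beta> (\<lambda>pq. (cone_dist \<Lambda> \<Sigma> (fst pq) (snd pq))\<^sup>2)"
proof (rule Bochner_Integration.integrable_bound)
  have [measurable_cong]: "sets \<beta> = sets borel"
    using \<beta> by (simp add: HK_admissible_def)
  show "(\<lambda>pq. (cone_dist \<Lambda> \<Sigma> (fst pq) (snd pq))\<^sup>2) \<in> borel_measurable \<beta>"
    unfolding cone_dist_def by measurable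
  show "integrable \<beta> (\<lambda>pq. 8 / \<Sigma> * ((snd (fst pq))\<^sup>2 * 1 + (snd (snd pq))\<^sup>2 * 1))"
    using HK_admissible_integrable_weighted[OF \<beta> X \<Sigma>, of "\<lambda>_. 1" 1] by simp
  show "AE pq in \<beta>. norm ((cone_dist \<Lambda> \<Sigma> (fst pq) (snd pq))\<^sup>2)
      \<le> norm (8 / \<Sigma> * ((snd (fst pq))\<^sup>2 * 1 + (snd (snd pq))\<^sup>2 * 1))"
    using cone_dist_sq_le[OF \<Sigma>] \<Sigma> by (intro AE_I2) simp
qed

lemma integral_hmap_marginals:
  fixes f :: "'a::topological_space \<Rightarrow> real"
  assumes [measurable_cong]: "sets \<beta> = sets borel" and [measurable]: "f \<in> borel_measurable borel"
  shows "(\<integral>x. f x \<partial>hmap (marg1 \<beta>)) = (\<integral>pq. (snd (fst pq))\<^sup>2 * f (fst (fst pq)) \<partial>\<beta>)"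
    and "(\<integral>x. f x \<partial>hmap (marg2 \<beta>)) = (\<integral>pq. (snd (snd pq))\<^sup>2 * f (fst (snd pq)) \<partial>\<beta>)"
  unfolding marg1_def marg2_def
  by (simp_all add: integral_hmap integral_distr)

lemma abs_integral_diff_le_deficit:
  fixes f :: "'a::topological_space \<Rightarrow> real"
  assumes \<mu>: "meas_on X \<mu>" and \<nu>: "sets \<nu> = sets borel" and le: "meas_le \<nu> \<mu>" and X: "X \<in> sets borel"
    and f: "f \<in> borel_measurable borel" and bound: "\<And>x. x \<in> X \<Longrightarrow> \<bar>f x\<bar> \<le> C"
  shows "\<bar>(\<integral>x. f x \<partial>\<mu>) - (\<integral>x. f x \<partial>\<nu>)\<bar> \<le> C * (measure \<mu> X - measure \<nu> X)"
proof (rule abs_integral_diff_le_measure_diff)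
  have sets: "sets \<mu> = sets borel"
    using \<mu> by (simp add: meas_on_def)
  then show "sets \<nu> = sets \<mu>" "X \<in> sets \<mu>" "f \<in> borel_measurable \<mu>"
    using \<nu> X f by (simp_all add: measurable_cong_sets[OF sets refl])
  show "\<nu> \<le> \<mu>"
    using le sets \<nu> sets_eq_imp_space_eq[OF sets] sets_eq_imp_space_eq[OF \<nu>]
    by (auto simp: le_measure_iff meas_le_def le_fun_def emeasure_notin_sets)
  show "finite_measure \<mu>"
    using \<mu> by (simp add: meas_on_def)
  show "AE x in \<mu>. x \<in> X"
    using \<mu> X sets sets_eq_imp_space_eq[OF sets]
    by (intro AE_I[where N = "UNIV - X"]) (auto simp: meas_on_def)
qed (use bound in auto)

section \<open>Integrating the remainder\<close>

lemma F_functional_approx_hmap_diff: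
  fixes \<phi> :: "'a::{real_inner, second_countable_topology} \<Rightarrow> real"
  assumes closed: "closed X" and convex: "convex X" and \<Lambda>: "0 < \<Lambda>" and \<Sigma>: "0 < \<Sigma>"
    and d\<phi>: "\<And>x. (\<phi> has_derivative (\<lambda>h. inner (grad x) h)) (at x)"
    and dgrad: "\<And>x. (grad has_derivative blinfun_apply (hess x)) (at x)"
    and bound: "\<And>x. x \<in> X \<Longrightarrow> \<bar>\<phi> x\<bar> + norm (grad x) + norm (hess x) \<le> C"
    and \<beta>: "HK_admissible \<Lambda> \<Sigma> X \<mu>1 \<mu>2 \<beta>"
  shows "\<bar>4 / \<Sigma> * ((\<integral>x. \<phi> x \<partial>hmap (marg2 \<beta>)) - (\<integral>x. \<phi> x \<partial>hmap (marg1 \<beta>)))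
      - F_functional \<Lambda> \<Sigma> \<phi> grad \<beta>\<bar>
    \<le> C * (6 + 16 * \<Lambda> / \<Sigma>) * (\<integral>pq. (cone_dist \<Lambda> \<Sigma> (fst pq) (snd pq))\<^sup>2 \<partial>\<beta>)"
proof -
  define K where "K = C * (6 + 16 * \<Lambda> / \<Sigma>)"
  define D where "D = (\<lambda>pq :: ('a \<times> real) \<times> ('a \<times> real). (cone_dist \<Lambda> \<Sigma> (fst pq) (snd pq))\<^sup>2)"
  define P1 where "P1 = (\<lambda>pq :: ('a \<times> real) \<times> ('a \<times> real). (snd (fst pq))\<^sup>2 * \<phi> (fst (fst pq)))"
  define P2 where "P2 = (\<lambda>pq :: ('a \<times> real) \<times> ('a \<times> real). (snd (snd pq))\<^sup>2 * \<phi> (fst (snd pq)))"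
  define R where "R = (\<lambda>pq. P2 pq - P1 pq - F_integrand \<Lambda> \<Sigma> \<phi> grad pq)"
  have sets_\<beta> [measurable_cong]: "sets \<beta> = sets borel"
    using \<beta> by (simp add: HK_admissible_def)
  have \<phi>_measurable [measurable]: "\<phi> \<in> borel_measurable borel"
    using d\<phi> by (rule borel_measurable_has_derivative)
  have [measurable]: "grad \<in> borel_measurable borel"
    using dgrad by (rule borel_measurable_has_derivative)
  have \<phi>_bound: "\<bar>\<phi> x\<bar> \<le> C" if "x \<in> X" for x
    using bound[OF that] norm_ge_zero[of "grad x"] norm_ge_zero[of "hess x"] by linarith
  have P: "integrable \<beta> P1" "integrable \<beta> P2"
    using HK_admissible_integrable_weighted[OF \<beta> closed \<Sigma> \<phi>_measurable, of C] \<phi>_bound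
    by (simp_all add: P1_def P2_def)
  have "AE pq in \<beta>. 4 / \<Sigma> * \<bar>R pq\<bar> \<le> K * D pq"
    using HK_admissible_AE_support[OF \<beta> closed]
  proof eventually_elim
    case (elim pq)
    obtain x1 r1 x2 r2 where "pq = ((x1, r1), (x2, r2))"
      by (metis prod.collapse)
    then show ?case
      using cone_integrand_remainder_bound[OF convex \<Lambda> \<Sigma> d\<phi> dgrad bound, of x1 x2 r1 r2] elim
      by (simp add: R_def P1_def P2_def D_def K_def)
  qed
  then have "AE pq in \<beta>. \<bar>R pq\<bar> \<le> \<Sigma> / 4 * (K * D pq)"
    by eventually_elim (use \<Sigma> in \<open>simp add: field_simps\<close>)
  from integrable_abs_integral_le_AE[OF _ _ this]
  have R: "integrable \<beta> R" "\<bar>\<integral>pq. R pq \<partial>\<beta>\<bar> \<le> \<Sigma> / 4 * (K * (\<integral>pq. D pq \<partial>\<beta>))"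
    using HK_admissible_integrable_cone_dist_sq[OF \<beta> closed \<Sigma>] by (simp_all add: R_def P1_def P2_def D_def)
  have "F_integrand \<Lambda> \<Sigma> \<phi> grad = (\<lambda>pq. P2 pq - P1 pq - R pq)"
    by (simp add: R_def)
  then have "F_functional \<Lambda> \<Sigma> \<phi> grad \<beta>
      = 4 / \<Sigma> * ((\<integral>pq. P2 pq \<partial>\<beta>) - (\<integral>pq. P1 pq \<partial>\<beta>) - (\<integral>pq. R pq \<partial>\<beta>))"
    using P R by (simp add: F_functional_eq)
  moreover have "(\<integral>x. \<phi> x \<partial>hmap (marg1 \<beta>)) = (\<integral>pq. P1 pq \<partial>\<beta>)"
    and "(\<integral>x. \<phi> x \<partial>hmap (marg2 \<beta>)) = (\<integral>pq. P2 pq \<partial>\<beta>)"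
    using integral_hmap_marginals[OF sets_\<beta> \<phi>_measurable] by (simp_all add: P1_def P2_def)
  ultimately have "4 / \<Sigma> * ((\<integral>x. \<phi> x \<partial>hmap (marg2 \<beta>)) - (\<integral>x. \<phi> x \<partial>hmap (marg1 \<beta>)))
      - F_functional \<Lambda> \<Sigma> \<phi> grad \<beta> = 4 / \<Sigma> * (\<integral>pq. R pq \<partial>\<beta>)"
    by (simp add: right_diff_distrib)
  then have "\<bar>4 / \<Sigma> * ((\<integral>x. \<phi> x \<partial>hmap (marg2 \<beta>)) - (\<integral>x. \<phi> x \<partial>hmap (marg1 \<beta>)))
      - F_functional \<Lambda> \<Sigma> \<phi> grad \<beta>\<bar> = 4 / \<Sigma> * \<bar>\<integral>pq. R pq \<partial>\<beta>\<bar>"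
    using \<Sigma> by (simp add: abs_mult)
  also have "\<dots> \<le> 4 / \<Sigma> * (\<Sigma> / 4 * (K * (\<integral>pq. D pq \<partial>\<beta>)))"
    using R(2) \<Sigma> by (intro mult_left_mono) auto
  finally show ?thesis
    using \<Sigma> by (simp add: K_def D_def)
qed

lemma first_variation_le_HK_cost:
  fixes \<phi> :: "'a::{real_inner, second_countable_topology} \<Rightarrow> real"
  assumes closed: "closed X" and convex: "convex X" and \<Lambda>: "0 < \<Lambda>" and \<Sigma>: "0 < \<Sigma>"
    and d\<phi>: "\<And>x. (\<phi> has_derivative (\<lambda>h. inner (grad x) h)) (at x)"
    and dgrad: "\<And>x. (grad has_derivative blinfun_apply (hess x)) (at x)"
    and bound: "\<And>x. x \<in> X \<Longrightarrow> \<bar>\<phi> x\<bar> + norm (grad x) + norm (hess x) \<le> C"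
    and \<nu>0: "meas_on X \<nu>0" and \<mu>: "meas_on X \<mu>" and \<beta>: "HK_admissible \<Lambda> \<Sigma> X \<nu>0 \<mu> \<beta>"
  shows "\<bar>4 / \<Sigma> * ((\<integral>x. \<phi> x \<partial>\<mu>) - (\<integral>x. \<phi> x \<partial>\<nu>0))
          - (F_functional \<Lambda> \<Sigma> \<phi> grad \<beta>
             - 8 / \<Sigma> * ((\<integral>x. \<phi> x \<partial>\<nu>0) - (\<integral>x. \<phi> x \<partial>hmap (marg1 \<beta>))))\<bar>
         \<le> C * (6 + 16 * \<Lambda> / \<Sigma>) * HK_cost \<Lambda> \<Sigma> X \<nu>0 \<mu> \<beta>"
proof -
  define a where "a = 4 / \<Sigma>"
  define K where "K = 6 + 16 * \<Lambda> / \<Sigma>"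
  define deficit where "deficit \<nu> \<alpha> = measure \<nu> X - measure (hmap \<alpha>) X" for \<nu> \<alpha>
  define D where "D = (\<integral>pq. (cone_dist \<Lambda> \<Sigma> (fst pq) (snd pq))\<^sup>2 \<partial>\<beta>)"
  have \<phi>_bound: "\<bar>\<phi> x\<bar> \<le> C" if "x \<in> X" for x
    using bound[OF that] norm_ge_zero[of "grad x"] norm_ge_zero[of "hess x"] by linarith
  have transport: "\<bar>a * ((\<integral>x. \<phi> x \<partial>hmap (marg2 \<beta>)) - (\<integral>x. \<phi> x \<partial>hmap (marg1 \<beta>)))
      - F_functional \<Lambda> \<Sigma> \<phi> grad \<beta>\<bar> \<le> C * K * D"
    unfolding a_def K_def D_def using F_functional_approx_hmap_diff[OF closed convex \<Lambda> \<Sigma> d\<phi> dgrad bound \<beta>] .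
  have creation: "\<bar>(\<integral>x. \<phi> x \<partial>\<mu>) - (\<integral>x. \<phi> x \<partial>hmap (marg2 \<beta>))\<bar> \<le> C * deficit \<mu> (marg2 \<beta>)"
    and destruction: "\<bar>(\<integral>x. \<phi> x \<partial>\<nu>0) - (\<integral>x. \<phi> x \<partial>hmap (marg1 \<beta>))\<bar> \<le> C * deficit \<nu>0 (marg1 \<beta>)"
    using \<beta> closed \<nu>0 \<mu> borel_measurable_has_derivative[OF d\<phi>] \<phi>_bound
    unfolding deficit_def HK_admissible_def
    by (auto simp: hmap_def intro!: abs_integral_diff_le_deficit)
  have a: "0 < a"
    using \<Sigma> by (simp add: a_def)
  have scale: "a * \<bar>t\<bar> \<le> K * (a * b)" if "\<bar>t\<bar> \<le> b" for t b
  proof -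
    have "1 \<le> K" "0 \<le> b"
      using \<Lambda> \<Sigma> that abs_ge_zero[of t] by (simp_all add: K_def)
    then show ?thesis
      using a mult_left_mono[OF that, of a] mult_right_mono[of 1 K "a * b"] by simp
  qed
  have "4 / \<Sigma> * ((\<integral>x. \<phi> x \<partial>\<mu>) - (\<integral>x. \<phi> x \<partial>\<nu>0))
      - (F_functional \<Lambda> \<Sigma> \<phi> grad \<beta> - 8 / \<Sigma> * ((\<integral>x. \<phi> x \<partial>\<nu>0) - (\<integral>x. \<phi> x \<partial>hmap (marg1 \<beta>))))
    = a * ((\<integral>x. \<phi> x \<partial>\<mu>) - (\<integral>x. \<phi> x \<partial>hmap (marg2 \<beta>)))
      + a * ((\<integral>x. \<phi> x \<partial>\<nu>0) - (\<integral>x. \<phi> x \<partial>hmap (marg1 \<beta>)))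
      + (a * ((\<integral>x. \<phi> x \<partial>hmap (marg2 \<beta>)) - (\<integral>x. \<phi> x \<partial>hmap (marg1 \<beta>))) - F_functional \<Lambda> \<Sigma> \<phi> grad \<beta>)"
    by (simp add: a_def algebra_simps)
  also have "\<bar>\<dots>\<bar> \<le> K * (a * (C * deficit \<mu> (marg2 \<beta>))) + K * (a * (C * deficit \<nu>0 (marg1 \<beta>))) + C * K * D"
    using scale[OF creation] scale[OF destruction] transport a
    by (intro abs_triangle_ineq[THEN order_trans] add_mono) (auto simp: abs_mult)
  also have "\<dots> = C * K * HK_cost \<Lambda> \<Sigma> X \<nu>0 \<mu> \<beta>"
    by (simp add: HK_cost_def a_def D_def deficit_def algebra_simps)
  finally show ?thesis
    unfolding K_def .
qed

theorem proposition2p5: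
  fixes X :: "'a::{real_inner, complete_space, second_countable_topology} set"
    and \<Lambda> \<Sigma> :: real
    and \<phi> :: "'a \<Rightarrow> real" and grad :: "'a \<Rightarrow> 'a" and hess :: "'a \<Rightarrow> 'a \<Rightarrow>\<^sub>L 'a"
    and \<nu>0 \<mu> :: "'a measure"
    and \<beta> :: "(('a \<times> real) \<times> ('a \<times> real)) measure"
  assumes "closed X" and "convex X"
    and "\<Lambda> > 0" and "\<Sigma> > 0"
    and "\<And>x. (\<phi> has_derivative (\<lambda>h. inner (grad x) h)) (at x)"
    and "\<And>x. (grad has_derivative blinfun_apply (hess x)) (at x)"
    and "continuous_on UNIV hess"
    and "bdd_above ((\<lambda>x. \<bar>\<phi> x\<bar> + norm (grad x) + norm (hess x)) ` X)"
    and "meas_on X \<nu>0" and "meas_on X \<mu>"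
    and "HK_optimal \<Lambda> \<Sigma> X \<nu>0 \<mu> \<beta>"
  shows "\<bar>4 / \<Sigma> * ((\<integral>x. \<phi> x \<partial>\<mu>) - (\<integral>x. \<phi> x \<partial>\<nu>0))
          - (F_functional \<Lambda> \<Sigma> \<phi> grad \<beta>
             - 8 / \<Sigma> * ((\<integral>x. \<phi> x \<partial>\<nu>0) - (\<integral>x. \<phi> x \<partial>hmap (marg1 \<beta>))))\<bar>
         \<le> C_phi X \<phi> grad hess * (6 + 16 * \<Lambda> / \<Sigma>) * HK2 \<Lambda> \<Sigma> X \<nu>0 \<mu>"
proof -
  have bound: "\<bar>\<phi> x\<bar> + norm (grad x) + norm (hess x) \<le> C_phi X \<phi> grad hess" if "x \<in> X" for x
    unfolding C_phi_def using that assms(8) by (rule cSUP_upper)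
  have \<beta>: "HK_admissible \<Lambda> \<Sigma> X \<nu>0 \<mu> \<beta>" and cost: "HK_cost \<Lambda> \<Sigma> X \<nu>0 \<mu> \<beta> = HK2 \<Lambda> \<Sigma> X \<nu>0 \<mu>"
    using assms(11) by (simp_all add: HK_optimal_def)
  from first_variation_le_HK_cost[OF assms(1-6) bound assms(9,10) \<beta>] show ?thesis
    unfolding cost .
qed

end
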